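(* Let $1\le d<\omega$, $2\le k<\omega$ and let $P\subseteq\mathbb R^d$ be a $k$-template. (a) If $P$ is simple, then $\chi(L(\mathbb R^d,P))$ is the least cardinal $\kappa$ such that $\kappa^{+(d-1)}\ge 2^{\aleph_0}$. (b) Suppose $I\subseteq d$ is a distinguisher for $P$ with $|I|=e(P)$, and let $Q=\{x\in\mathbb R^d : x\restriction I = y\restriction I \text{ for some } y\in P \text{ and } x_i=0 \text{ for } i\in d\setminus I\}$. Then $\chi(L(\mathbb R^d,Q))$ is the least cardinal $\kappa$ such that $\kappa^{+(e(P)-1)}\ge 2^{\aleph_0}$.
   Context: A $d$-dimensional $k$-template is a set $P$ of $d$-tuples with $|P|=k$. $P$ is simple if for every $m<d$ there are $x,y\in P$ such that for all $i<d$, $x_i=y_i$ iff $i\ne m$. If $P,Q$ are $d$-dimensional templates, $Q$ is a homomorphic image of $P$ if there is a surjection $f:P\to Q$ such that for all $x,y\in P$ and $i<d$, $x_i=y_i$ implies $f(x)_i=f(y)_i$. $L(\mathbb R^d,P)$ is the hypergraph with vertex set $\mathbb R^d$ whose edges are the $k$-templates contained in $\mathbb R^d$ that are homomorphic images of $P$. Here $d=\{0,\dots,d-1\}$; a set $I\subseteq d$ is a distinguisher for $P$ if for all distinct $x,y\in P$ there is $i\in I$ with $x_i\ne y_i$, and $e(P)$ is the least cardinality of a distinguisher. $x\restriction I$ is the restriction of the tuple $x$ to the coordinates in $I$. $\chi$ is chromatic number (least cardinal number of colors in a vertex coloring not constant on any edge). $\kappa^+$ is the successor cardinal, $\kappa^{+0}=\kappa$,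 $\kappa^{+(n+1)}=(\kappa^{+n})^+$. *)

theory Defs
  imports "HOL-Analysis.Analysis"
begin

text \<open>Points of R^d are vectors of type real^'n, with d = CARD('n) (so d >= 1).
  Coordinates are indexed by the finite type 'n, playing the role of d = {0,...,d-1}.\<close>

definition simple_template :: "(real^'n) set \<Rightarrow> bool" where
  "simple_template P \<longleftrightarrow>
     (\<forall>m. \<exists>x\<in>P. \<exists>y\<in>P. \<forall>i. (x $ i = y $ i) \<longleftrightarrow> i \<noteq> m)"

definition hom_image :: "(real^'n) set \<Rightarrow> (real^'n) set \<Rightarrow> bool" where
  "hom_image P Q \<longleftrightarrow>
     (\<exists>f. f ` P = Q \<and> (\<forall>x\<in>P. \<forall>y\<in>P. \<forall>i. x $ i = y $ i \<longrightarrow> f x $ i = f y $ i))"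

text \<open>The hypergraph L(R^d,P), given by its edge set (vertex set is all of R^d):
  the k-templates (k = card P) that are homomorphic images of P.\<close>
definition L_edges :: "(real^'n) set \<Rightarrow> (real^'n) set set" where
  "L_edges P = {Q. finite Q \<and> card Q = card P \<and> hom_image P Q}"

definition distinguisher :: "(real^'n) set \<Rightarrow> 'n set \<Rightarrow> bool" where
  "distinguisher P I \<longleftrightarrow> (\<forall>x\<in>P. \<forall>y\<in>P. x \<noteq> y \<longrightarrow> (\<exists>i\<in>I. x $ i \<noteq> y $ i))"

definition e_num :: "(real^'n) set \<Rightarrow> nat" where
  "e_num P = (LEAST n. \<exists>J. distinguisher P J \<and> card J = n)"

definition Q_of :: "(real^'n) set \<Rightarrow> 'n set \<Rightarrow> (real^'n) set" where
  "Q_of P I = {x. (\<exists>y\<in>P. \<forall>i\<in>I. x $ i = y $ i) \<and> (\<forall>i. i \<notin> I \<longrightarrow> x $ i = 0)}"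

definition colorable :: "'v set set \<Rightarrow> 'c set \<Rightarrow> bool" where
  "colorable E C \<longleftrightarrow>
     (\<exists>f. (\<forall>v. f v \<in> C) \<and> (\<forall>e\<in>E. \<not> (\<exists>c. \<forall>v\<in>e. f v = c)))"

text \<open>C has the chromatic number as cardinality (minimum over colour sets of type 'c).\<close>
definition is_chromatic_number :: "'v set set \<Rightarrow> 'c set \<Rightarrow> bool" where
  "is_chromatic_number E C \<longleftrightarrow>
     colorable E C \<and> (\<forall>D::'c set. colorable E D \<longrightarrow> (card_of C, card_of D) \<in> ordLeq)"

text \<open>succ_iter n K L: |L| = |K|^{+n}, witnessed by a chain of successor cardinals
  represented by sets of the type of L.\<close>
definition succ_iter :: "nat \<Rightarrow> 'a set \<Rightarrow> 'b set \<Rightarrow> bool" where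
  "succ_iter n K L \<longleftrightarrow>
     (\<exists>A :: nat \<Rightarrow> 'b set.
        (card_of (A 0), card_of K) \<in> ordIso \<and>
        (\<forall>i<n. (card_of (A (Suc i)), cardSuc (card_of (A i))) \<in> ordIso) \<and>
        A n = L)"

text \<open>|K|^{+n} >= 2^aleph_0 = |UNIV::real set|. If |K|^{+n} is not representable
  by a set of reals, it exceeds the continuum and the condition holds vacuously.\<close>
definition succ_ge_continuum :: "nat \<Rightarrow> 'a set \<Rightarrow> bool" where
  "succ_ge_continuum n K \<longleftrightarrow>
     (\<forall>L :: real set. succ_iter n K L \<longrightarrow> (card_of (UNIV::real set), card_of L) \<in> ordLeq)"

text \<open>chi(E) is the least cardinal kappa with kappa^{+n} >= 2^aleph_0.
  Cardinals are represented by sets of reals (all relevant ones are <= continuum).\<close>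
definition chi_is_least_succ_ge :: "'v set set \<Rightarrow> nat \<Rightarrow> bool" where
  "chi_is_least_succ_ge E n \<longleftrightarrow>
     (\<exists>C :: real set. is_chromatic_number E C \<and> succ_ge_continuum n C \<and>
        (\<forall>D :: real set. succ_ge_continuum n D \<longrightarrow> (card_of C, card_of D) \<in> ordLeq))"

end

theory Submission
  imports Defs
begin

text \<open>Let \<open>J\<close> be a set of \<open>n + 1\<close> coordinates outside of which the template \<open>P\<close> is
  constant, and on which it is simple: all coordinates in part (a); in part (b) a minimum-size
  distinguisher, whose minimality makes \<open>Q\<close> simple on it.

  Lower bound: if \<open>D\<^sup>+\<^sup>n\<close> is below the continuum, any colouring of \<open>\<real>\<^sup>d\<close> with colours
  \<open>D\<close> has a monochromatic grid \<open>G\<^sub>1 \<times> \<dots> \<times> G\<^sub>n\<^sub>+\<^sub>1\<close> (in the coordinates \<open>J\<close>) with sides of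
  size \<open>|P|\<close>. This is an induction on the number of coordinates whose steps are pigeonhole
  arguments for maps from a set of size \<open>\<kappa>\<^sup>+\<close> into one of size \<open>\<kappa>\<close> (or from a very large
  finite set, if \<open>D\<close> is finite). Such a grid contains a homomorphic copy of \<open>P\<close>.

  Upper bound: if \<open>C\<^sup>+\<^sup>n\<close> reaches the continuum, then, along a chain \<open>C = B\<^sub>0, B\<^sub>1, \<dots>\<close> with
  \<open>|B\<^sub>j\<^sub>+\<^sub>1| \<le> |B\<^sub>j|\<^sup>+\<close>, a Kuratowski--Sierpinski style induction colours every point \<open>x\<close> by a
  direction \<open>m \<in> J\<close> and a colour from \<open>C\<close> such that no other point on the line through \<open>x\<close>
  in direction \<open>m\<close> gets the same colour. A homomorphic copy of \<open>P\<close> contains two points that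
  differ exactly in the coordinate named by its colour, so it is not monochromatic.\<close>

unbundle cardinal_syntax

section \<open>Cardinal arithmetic and pigeonhole principles\<close>

lemma card_of_finite_le_infinite: "finite A \<Longrightarrow> infinite B \<Longrightarrow> |A| \<le>o |B|"
  by (rule ordLess_imp_ordLeq,
      rule finite_ordLess_infinite[OF card_of_Well_order card_of_Well_order])
    (simp_all add: Field_card_of)

fun insertion_sets :: "'a set \<Rightarrow> nat \<Rightarrow> 'a set set" where
  "insertion_sets A 0 = {{}}"
| "insertion_sets A (Suc k) = (\<lambda>(S, a). insert a S) ` (insertion_sets A k \<times> A)"

lemma card_of_insertion_sets: "infinite A \<Longrightarrow> |insertion_sets A k| \<le>o |A|"
proof (induction k)
  case 0
  then show ?case using card_of_singl_ordLeq[of A "{}"] by auto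
next
  case (Suc k)
  have "|insertion_sets A (Suc k)| \<le>o |insertion_sets A k \<times> A|"
    unfolding insertion_sets.simps by (rule card_of_image)
  also have "|insertion_sets A k \<times> A| \<le>o |A \<times> A|"
    using Suc.IH[OF Suc.prems] by (rule card_of_Times_mono1)
  also have "|A \<times> A| =o |A|" using Suc.prems by (simp add: card_of_Times_same_infinite)
  finally show ?case .
qed

lemma card_of_Fpow_le_infinite:
  assumes "infinite A" shows "|Fpow A| \<le>o |A|"
proof -
  have "S \<in> insertion_sets A (card S)" if "finite S" "S \<subseteq> A" for S
    using that by (induction S rule: finite_induct) (auto simp: image_iff)
  then have "Fpow A \<subseteq> (\<Union>k. insertion_sets A k)" by (auto simp: Fpow_def)
  moreover have "|\<Union>k. insertion_sets A k| \<le>o |A|"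
    using card_of_UNION_ordLeq_infinite[OF assms, of UNIV] card_of_insertion_sets[OF assms]
      infinite_iff_card_of_nat assms by blast
  ultimately show ?thesis using card_of_mono1 ordLeq_transitive by blast
qed

lemma card_of_UNIV_ordLess_if_unrepresentable:
  fixes r :: "'b rel"
  assumes "Card_order r" and "\<not> (\<exists>L::'a set. |L| =o r)"
  shows "|UNIV::'a set| <o r"
proof (rule ccontr)
  assume "\<not> |UNIV::'a set| <o r"
  then have "r \<le>o |UNIV::'a set|"
    using ordLess_or_ordLeq[OF card_of_Well_order] assms(1) by (auto simp: card_order_on_def)
  moreover have field: "|Field r| =o r" by (rule card_of_Field_ordIso[OF assms(1)])
  ultimately have "|Field r| \<le>o |UNIV::'a set|" using ordIso_ordLeq_trans by blast
  then obtain g :: "_ \<Rightarrow> 'a" where "inj_on g (Field r)" by (auto simp: card_of_ordLeq[symmetric])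
  then have "|Field r| =o |g ` Field r|" using bij_betw_imageI card_of_ordIso by blast
  then have "|g ` Field r| =o r" using field ordIso_symmetric ordIso_transitive by blast
  then show False using assms(2) by blast
qed

definition pigeonhole :: "nat \<Rightarrow> 'a set \<Rightarrow> 'b set \<Rightarrow> bool" where
  "pigeonhole N X Z \<longleftrightarrow>
     (\<forall>h. h ` X \<subseteq> Z \<longrightarrow> (\<exists>T c. T \<subseteq> X \<and> finite T \<and> N \<le> card T \<and> (\<forall>t\<in>T. h t = c)))"

lemma pigeonhole_finite:
  assumes "finite Z" "finite X" "card Z * N < card X"
  shows "pigeonhole N X Z"
  unfolding pigeonhole_def
proof (intro allI impI, rule ccontr)
  fix h assume hZ: "h ` X \<subseteq> Z" and no: "\<nexists>T c. T \<subseteq> X \<and> finite T \<and> N \<le> card T \<and> (\<forall>t\<in>T. h t = c)"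
  have fibre: "card {t\<in>X. h t = c} \<le> N" for c
    using no assms(2)
    by (metis (mono_tags, lifting) finite_subset mem_Collect_eq nat_le_linear subsetI)
  have "card X \<le> card (\<Union>c\<in>Z. {t\<in>X. h t = c})"
    using hZ assms(1,2) by (intro card_mono) auto
  also have "\<dots> \<le> (\<Sum>c\<in>Z. card {t\<in>X. h t = c})" by (rule card_UN_le[OF assms(1)])
  also have "\<dots> \<le> card Z * N" using sum_mono[of Z _ "\<lambda>_. N", OF fibre] by simp
  finally show False using assms(3) by simp
qed

lemma pigeonhole_infinite:
  assumes "infinite X" "|Z| <o |X|"
  shows "pigeonhole N X Z"
  unfolding pigeonhole_def
proof (intro allI impI, rule ccontr)
  fix h assume hZ: "h ` X \<subseteq> Z" and no: "\<nexists>T c. T \<subseteq> X \<and> finite T \<and> N \<le> card T \<and> (\<forall>t\<in>T. h t = c)"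
  have fibre: "finite {t\<in>X. h t = c}" for c
  proof (rule ccontr)
    assume "infinite {t\<in>X. h t = c}"
    then obtain T where "T \<subseteq> {t\<in>X. h t = c}" "finite T" "card T = N"
      using infinite_arbitrarily_large by blast
    then show False using no by blast
  qed
  have X: "X = (\<Union>c\<in>h ` X. {t\<in>X. h t = c})" by auto
  show False
  proof (cases "finite Z")
    case True
    then have "finite (h ` X)" using hZ finite_subset by blast
    then have "finite (\<Union>c\<in>h ` X. {t\<in>X. h t = c})" using fibre by blast
    then show False using X assms(1) by simp
  next
    case False
    have "|\<Union>c\<in>h ` X. {t\<in>X. h t = c}| \<le>o |Z|"
    proof (rule card_of_UNION_ordLeq_infinite[OF False])
      show "|h ` X| \<le>o |Z|" using hZ by (rule card_of_mono1)
      show "\<forall>c\<in>h ` X. |{t \<in> X. h t = c}| \<le>o |Z|"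
        using fibre card_of_finite_le_infinite False by blast
    qed
    then have "|X| \<le>o |Z|" using X by simp
    then show False using assms(2) not_ordLess_ordLeq by blast
  qed
qed

section \<open>Monochromatic grids and the lower bound\<close>

definition vec_upd :: "real^'n \<Rightarrow> 'n \<Rightarrow> real \<Rightarrow> real^'n" where
  "vec_upd z m t = (\<chi> l. if l = m then t else z $ l)"

lemma vec_upd_nth [simp]: "vec_upd z m t $ l = (if l = m then t else z $ l)"
  by (simp add: vec_upd_def)

definition grid :: "'n set \<Rightarrow> ('n \<Rightarrow> real set) \<Rightarrow> real^'n \<Rightarrow> (real^'n) set" where
  "grid J G z = {x. (\<forall>l\<in>J. x $ l \<in> G l) \<and> (\<forall>l. l \<notin> J \<longrightarrow> x $ l = z $ l)}"

lemma grid_empty: "grid {} G z = {z}"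
  by (auto simp: grid_def vec_eq_iff)

lemma grid_fun_upd:
  assumes "m \<in> J" "x \<in> grid J (G(m := T)) z"
  shows "x $ m \<in> T" and "x \<in> grid (J - {m}) G (vec_upd z m (x $ m))"
proof -
  have x: "\<And>l. l \<in> J \<Longrightarrow> x $ l \<in> (G(m := T)) l" "\<And>l. l \<notin> J \<Longrightarrow> x $ l = z $ l"
    using assms(2) by (auto simp: grid_def simp del: fun_upd_apply)
  show "x $ m \<in> T" using x(1)[OF assms(1)] by simp
  have "x $ l \<in> G l" if "l \<in> J - {m}" for l using x(1)[of l] that by simp
  moreover have "x $ l = vec_upd z m (x $ m) $ l" if "l \<notin> J - {m}" for l
    using x(2)[of l] that by auto
  ultimately show "x \<in> grid (J - {m}) G (vec_upd z m (x $ m))" unfolding grid_def by blast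
qed

definition grid_data :: "'c set \<Rightarrow> real set \<Rightarrow> (('n \<Rightarrow> real set) \<times> 'c) set" where
  "grid_data D Y = {(G, c). (\<forall>l. G l \<subseteq> Y \<and> finite (G l)) \<and> c \<in> D}"

definition monochromatic_grid ::
    "(real^'n \<Rightarrow> 'c) \<Rightarrow> 'c set \<Rightarrow> nat \<Rightarrow> 'n set \<Rightarrow> real set \<Rightarrow> real^'n \<Rightarrow> bool" where
  "monochromatic_grid f D N J X z \<longleftrightarrow>
     (\<exists>G c. (G, c) \<in> grid_data D X \<and> (\<forall>l\<in>J. N \<le> card (G l)) \<and> (\<forall>x\<in>grid J G z. f x = c))"

lemma monochromatic_grid_fun_upd:
  assumes "m \<in> J" "(G, c) \<in> grid_data D Y" "Y \<subseteq> X" "T \<subseteq> X" "finite T" "N \<le> card T"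
    and "\<forall>l\<in>J - {m}. N \<le> card (G l)"
    and "\<And>t x. t \<in> T \<Longrightarrow> x \<in> grid (J - {m}) G (vec_upd z m t) \<Longrightarrow> f x = c"
  shows "monochromatic_grid f D N J X z"
  unfolding monochromatic_grid_def
proof (intro exI conjI)
  show "(G(m := T), c) \<in> grid_data D X" using assms(2-5) by (auto simp: grid_data_def)
  show "\<forall>l\<in>J. N \<le> card ((G(m := T)) l)" using assms(6,7) by auto
  show "\<forall>x\<in>grid J (G(m := T)) z. f x = c" using grid_fun_upd[OF assms(1)] assms(8) by blast
qed

text \<open>\<open>large i X\<close> means that \<open>X\<close> is big enough for a monochromatic grid in \<open>i\<close> coordinates.
  Each value \<open>t\<close> of a new coordinate is labelled with a monochromatic grid (and its colour)
  found with sides in a smaller \<open>Y\<close> in the hyperplane through \<open>t\<close>; pigeonhole makes the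
  label constant on \<open>N\<close> values of \<open>t\<close>.\<close>
lemma monochromatic_grid_exists:
  fixes f :: "real^'n \<Rightarrow> 'c" and large :: "nat \<Rightarrow> real set \<Rightarrow> bool"
  assumes colours: "\<And>x. f x \<in> D" and N: "1 \<le> N"
    and shrink: "\<And>i X. large (Suc i) X \<Longrightarrow>
      \<exists>Y\<subseteq>X. large i Y \<and> pigeonhole N X (grid_data D Y :: (('n \<Rightarrow> real set) \<times> 'c) set)"
  shows "card J = i \<Longrightarrow> large i X \<Longrightarrow> monochromatic_grid f D N J X z"
proof (induction i arbitrary: J X z)
  case (0 J X z)
  then have J: "J = {}" by simp
  show ?case
    unfolding monochromatic_grid_def
  proof (intro exI conjI)
    show "((\<lambda>_. {}), f z) \<in> grid_data D X" using colours by (simp add: grid_data_def)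
    show "\<forall>l\<in>J. N \<le> card ((\<lambda>_. {}) l)" using J by simp
    show "\<forall>x\<in>grid J (\<lambda>_. {}) z. f x = f z" using J grid_empty[of "\<lambda>_. {}" z] by simp
  qed
next
  case (Suc i J X z)
  then obtain m where m: "m \<in> J" by fastforce
  have card: "card (J - {m}) = i" using Suc.prems(1) m by simp
  obtain Y where Y: "Y \<subseteq> X" "large i Y"
    and pig: "pigeonhole N X (grid_data D Y :: (('n \<Rightarrow> real set) \<times> 'c) set)"
    using shrink[OF Suc.prems(2)] by blast
  have ex: "\<forall>t. \<exists>p. p \<in> grid_data D Y \<and> (\<forall>l\<in>J - {m}. N \<le> card (fst p l))
      \<and> (\<forall>x\<in>grid (J - {m}) (fst p) (vec_upd z m t). f x = snd p)"
    using Suc.IH[OF card Y(2)] unfolding monochromatic_grid_def by force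
  obtain h where "\<forall>t. h t \<in> grid_data D Y \<and> (\<forall>l\<in>J - {m}. N \<le> card (fst (h t) l))
      \<and> (\<forall>x\<in>grid (J - {m}) (fst (h t)) (vec_upd z m t). f x = snd (h t))"
    using choice[OF ex] by blast
  then obtain G' c' where h: "\<And>t. (G' t, c' t) \<in> grid_data D Y"
    "\<And>t l. l \<in> J - {m} \<Longrightarrow> N \<le> card (G' t l)"
    "\<And>t x. x \<in> grid (J - {m}) (G' t) (vec_upd z m t) \<Longrightarrow> f x = c' t"
    by (intro that[of "\<lambda>t. fst (h t)" "\<lambda>t. snd (h t)"]) auto
  have into: "(\<lambda>t. (G' t, c' t)) ` X \<subseteq> grid_data D Y" using h(1) by blast
  obtain T p where T: "T \<subseteq> X" "finite T" "N \<le> card T"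
    and hT': "\<And>t. t \<in> T \<Longrightarrow> (G' t, c' t) = p"
    using pig[unfolded pigeonhole_def, rule_format, OF into] by blast
  obtain G c where "p = (G, c)" by fastforce
  with hT' have hT: "\<And>t. t \<in> T \<Longrightarrow> G' t = G \<and> c' t = c" by simp
  have "T \<noteq> {}" using T(3) N by auto
  then obtain t0 where t0: "t0 \<in> T" by blast
  show ?case
  proof (rule monochromatic_grid_fun_upd[OF m _ Y(1) T])
    show "(G, c) \<in> grid_data D Y" using h(1)[of t0] hT[OF t0] by simp
    show "\<forall>l\<in>J - {m}. N \<le> card (G l)" using h(2)[where t = t0] hT[OF t0] by auto
    show "f x = c" if "t \<in> T" "x \<in> grid (J - {m}) G (vec_upd z m t)" for t x
      using h(3) hT that by metis
  qed
qed

lemma grid_data_finite: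
  assumes "finite Y" "finite D"
  shows "finite (grid_data D Y :: (('n::finite \<Rightarrow> real set) \<times> 'c) set)"
    and "card (grid_data D Y :: (('n::finite \<Rightarrow> real set) \<times> 'c) set)
           \<le> 2 ^ (card Y * CARD('n)) * card D"
proof -
  let ?S = "PiE (UNIV::'n set) (\<lambda>_. Pow Y) \<times> D"
  have sub: "(grid_data D Y :: (('n \<Rightarrow> real set) \<times> 'c) set) \<subseteq> ?S"
    unfolding grid_data_def by auto
  have fin: "finite ?S" using assms by (simp add: finite_PiE)
  have card: "card ?S = 2 ^ (card Y * CARD('n)) * card D"
    using assms(1) by (simp add: card_PiE card_Pow power_mult card_cartesian_product)
  show "finite (grid_data D Y :: (('n \<Rightarrow> real set) \<times> 'c) set)"
    using sub fin by (rule finite_subset)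
  show "card (grid_data D Y :: (('n \<Rightarrow> real set) \<times> 'c) set) \<le> 2 ^ (card Y * CARD('n)) * card D"
    using card_mono[OF fin sub] card by simp
qed

lemma card_of_grid_data_le:
  assumes Y: "infinite Y" and D: "|D| \<le>o |Y|"
  shows "|grid_data D Y :: (('n::finite \<Rightarrow> real set) \<times> 'c) set| \<le>o |Y|"
proof -
  let ?Gs = "{G :: 'n \<Rightarrow> real set. \<forall>l. G l \<subseteq> Y \<and> finite (G l)}"
  have UY: "|(UNIV::'n set) \<times> Y| =o |Y|"
    using card_of_Times_infinite[OF Y UNIV_not_empty card_of_finite_le_infinite[OF finite Y]]
      card_of_Times_commute ordIso_transitive by blast
  then have infinite_UY: "infinite ((UNIV::'n set) \<times> Y)"
    using Y card_of_ordIso_finite by blast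
  have "inj (Sigma (UNIV::'n set) :: ('n \<Rightarrow> real set) \<Rightarrow> _)"
  proof (rule injI, rule ext)
    fix G1 G2 :: "'n \<Rightarrow> real set" and l assume "Sigma UNIV G1 = Sigma UNIV G2"
    moreover have "G l = {y. (l, y) \<in> Sigma UNIV G}" for G :: "'n \<Rightarrow> real set" by simp
    ultimately show "G1 l = G2 l" by metis
  qed
  then have "inj_on (Sigma UNIV) ?Gs" by (rule inj_on_subset) simp
  moreover have "Sigma UNIV ` ?Gs \<subseteq> Fpow ((UNIV::'n set) \<times> Y)"
    by (auto simp: Fpow_def)
  ultimately have "|?Gs| \<le>o |Fpow ((UNIV::'n set) \<times> Y)|" using card_of_ordLeq by blast
  also have "|Fpow ((UNIV::'n set) \<times> Y)| \<le>o |(UNIV::'n set) \<times> Y|"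
    by (rule card_of_Fpow_le_infinite[OF infinite_UY])
  also note ordIso_imp_ordLeq[OF UY]
  finally have Gs: "|?Gs| \<le>o |Y|" .
  have "grid_data D Y \<subseteq> ?Gs \<times> D" unfolding grid_data_def by auto
  then have "|grid_data D Y :: (('n \<Rightarrow> real set) \<times> 'c) set| \<le>o |?Gs \<times> D|"
    by (rule card_of_mono1)
  also have "|?Gs \<times> D| \<le>o |Y|"
    using card_of_Times_ordLeq_infinite_Field[of "|Y|"] Y Gs D
    by (simp add: card_of_Card_order Field_card_of card_of_card_order_on)
  finally show ?thesis .
qed

lemma monochromatic_grid_finite_colours:
  fixes f :: "real^'n \<Rightarrow> 'c"
  assumes D: "finite D" and colours: "\<And>x. f x \<in> D" and N: "1 \<le> N"
  obtains X where "monochromatic_grid f D N J X z"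
proof -
  define M :: "nat \<Rightarrow> nat" where "M = rec_nat 0 (\<lambda>_ m. 2 ^ (m * CARD('n)) * card D * N + 1)"
  have M_Suc: "M (Suc i) = 2 ^ (M i * CARD('n)) * card D * N + 1" for i
    by (simp add: M_def)
  have "1 \<le> card D" using D colours by (metis card_0_eq empty_iff less_one not_le)
  then have M_less: "M i < M (Suc i)" for i
  proof -
    have "M i < 2 ^ M i" by (rule less_exp)
    also have "\<dots> \<le> 2 ^ (M i * CARD('n))" by (simp add: Suc_le_eq)
    also have "\<dots> \<le> 2 ^ (M i * CARD('n)) * card D * N"
      using \<open>1 \<le> card D\<close> N by simp
    finally show ?thesis by (simp add: M_Suc)
  qed
  define large :: "nat \<Rightarrow> real set \<Rightarrow> bool" where "large i X \<longleftrightarrow> finite X \<and> M i \<le> card X" for i X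
  have grid: "monochromatic_grid f D N J X z" if "large (card J) X" for X
  proof (rule monochromatic_grid_exists[where large = large, OF colours N _ refl that])
    fix i X assume "large (Suc i) X"
    then have X: "finite X" "M (Suc i) \<le> card X" by (auto simp: large_def)
    with M_less[of i] obtain Y where Y: "Y \<subseteq> X" "card Y = M i"
      by (meson less_imp_le_nat le_trans obtain_subset_with_card_n)
    have "finite Y" using Y(1) X(1) finite_subset by blast
    then have data: "finite (grid_data D Y :: (('n \<Rightarrow> real set) \<times> 'c) set)"
        "card (grid_data D Y :: (('n \<Rightarrow> real set) \<times> 'c) set) \<le> 2 ^ (card Y * CARD('n)) * card D"
      by (rule grid_data_finite[OF _ D])+
    have "card (grid_data D Y :: (('n \<Rightarrow> real set) \<times> 'c) set) * N
        \<le> 2 ^ (M i * CARD('n)) * card D * N"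
      using data(2) Y(2) by simp
    also have "\<dots> < card X" using X(2) by (simp add: M_Suc)
    finally have "pigeonhole N X (grid_data D Y :: (('n \<Rightarrow> real set) \<times> 'c) set)"
      by (rule pigeonhole_finite[OF data(1) X(1)])
    then show "\<exists>Y\<subseteq>X. large i Y \<and> pigeonhole N X (grid_data D Y :: (('n \<Rightarrow> real set) \<times> 'c) set)"
      using Y \<open>finite Y\<close> by (auto simp: large_def)
  qed
  obtain X :: "real set" where "finite X" "card X = M (card J)"
    using infinite_arbitrarily_large[OF infinite_UNIV_char_0] by blast
  then show thesis using that grid[of X] by (simp add: large_def)
qed

lemma monochromatic_grid_infinite_colours:
  fixes f :: "real^'n \<Rightarrow> 'c" and A :: "nat \<Rightarrow> real set" and X :: "real set"
  assumes D: "infinite D" and colours: "\<And>x. f x \<in> D" and N: "1 \<le> N"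
    and A_0: "|A 0| =o |D|" and A_Suc: "\<And>i. i < n \<Longrightarrow> |A (Suc i)| =o cardSuc |A i|"
    and X: "|A n| <o |X|" and J: "card J = Suc n"
  shows "monochromatic_grid f D N J X z"
proof -
  have A_large: "infinite (A i) \<and> |D| \<le>o |A i|" if "i \<le> n" for i
    using that
  proof (induction i)
    case 0
    have "|D| =o |A 0|" using A_0 by (rule ordIso_symmetric)
    then show ?case using D card_of_ordIso_finite ordIso_imp_ordLeq by blast
  next
    case (Suc i)
    have "|A i| \<le>o cardSuc |A i|" by (rule cardSuc_ordLeq[OF card_of_Card_order])
    also have "cardSuc |A i| =o |A (Suc i)|"
      using A_Suc[of i] Suc.prems by (simp add: ordIso_symmetric)
    finally show ?case using Suc card_of_ordLeq_infinite ordLeq_transitive by auto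
  qed
  define large :: "nat \<Rightarrow> real set \<Rightarrow> bool"
    where "large i X \<longleftrightarrow> i \<le> Suc n \<and> (case i of 0 \<Rightarrow> True | Suc j \<Rightarrow> |A j| <o |X| )"
    for i X
  show ?thesis
  proof (rule monochromatic_grid_exists[where large = large, OF colours N _ J])
    fix i X assume "large (Suc i) X"
    then have i: "i \<le> n" and AX: "|A i| <o |X|" by (auto simp: large_def)
    then obtain g where g: "inj_on g (A i)" "g ` A i \<subseteq> X"
      using card_of_ordLeq ordLess_imp_ordLeq by metis
    define Y where "Y = g ` A i"
    have AY: "|A i| =o |Y|" unfolding Y_def using g(1) card_of_ordIso bij_betw_imageI by blast
    have "large i Y"
    proof (cases i)
      case 0
      then show ?thesis by (simp add: large_def)
    next
      case (Suc j)
      have "|A j| <o cardSuc |A j|" by (rule cardSuc_greater[OF card_of_Card_order])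
      also have "cardSuc |A j| =o |A i|" using A_Suc[of j] Suc i by (simp add: ordIso_symmetric)
      also note AY
      finally show ?thesis using Suc i by (simp add: large_def)
    qed
    moreover have "pigeonhole N X (grid_data D Y :: (('n \<Rightarrow> real set) \<times> 'c) set)"
    proof (rule pigeonhole_infinite)
      have Y: "infinite Y" "|D| \<le>o |Y|"
        using A_large[OF i] AY card_of_ordIso_finite ordLeq_ordIso_trans by blast+
      then show "infinite X" using g(2) Y_def finite_subset by blast
      have "|Y| <o |X|" using AY AX ordIso_ordLess_trans ordIso_symmetric by blast
      then show "|grid_data D Y :: (('n \<Rightarrow> real set) \<times> 'c) set| <o |X|"
        using card_of_grid_data_le[OF Y] ordLeq_ordLess_trans by blast
    qed
    ultimately show "\<exists>Y\<subseteq>X. large i Y \<and> pigeonhole N X (grid_data D Y :: (('n \<Rightarrow> real set) \<times> 'c) set)"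
      using g(2) Y_def by blast
  next
    show "large (Suc n) X" using X by (simp add: large_def)
  qed
qed

definition agree_outside :: "'n set \<Rightarrow> (real^'n) set \<Rightarrow> bool" where
  "agree_outside J P \<longleftrightarrow> (\<forall>x\<in>P. \<forall>y\<in>P. \<forall>l. l \<notin> J \<longrightarrow> x $ l = y $ l)"

definition simple_on :: "'n set \<Rightarrow> (real^'n) set \<Rightarrow> bool" where
  "simple_on J P \<longleftrightarrow> (\<forall>m\<in>J. \<exists>x\<in>P. \<exists>y\<in>P. \<forall>l\<in>J. x $ l = y $ l \<longleftrightarrow> l \<noteq> m)"

lemma monochromatic_grid_imp_monochromatic_edge:
  fixes P :: "(real^'n) set"
  assumes P: "finite P" "agree_outside J P" and grid: "monochromatic_grid f D (card P) J X z"
  shows "\<exists>Q\<in>L_edges P. \<exists>c. \<forall>v\<in>Q. f v = c"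
proof -
  obtain G c where G: "\<And>l. l \<in> J \<Longrightarrow> card P \<le> card (G l)" "\<And>l. finite (G l)"
    and mono: "\<And>x. x \<in> grid J G z \<Longrightarrow> f x = c"
    using grid unfolding monochromatic_grid_def grid_data_def by blast
  have "\<exists>\<phi>. \<phi> ` ((\<lambda>x. x $ l) ` P) \<subseteq> G l \<and> inj_on \<phi> ((\<lambda>x. x $ l) ` P)" if "l \<in> J" for l
  proof (rule card_le_inj)
    have "card ((\<lambda>x. x $ l) ` P) \<le> card P" by (rule card_image_le[OF P(1)])
    then show "card ((\<lambda>x. x $ l) ` P) \<le> card (G l)" using G(1)[OF that] by linarith
  qed (use P(1) G(2) in auto)
  then obtain \<phi> where \<phi>: "\<And>l. l \<in> J \<Longrightarrow> \<phi> l ` ((\<lambda>x. x $ l) ` P) \<subseteq> G l"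
    "\<And>l. l \<in> J \<Longrightarrow> inj_on (\<phi> l) ((\<lambda>x. x $ l) ` P)"
    by metis
  define F where "F x = (\<chi> l. if l \<in> J then \<phi> l (x $ l) else z $ l)" for x :: "real^'n"
  have F_nth: "F x $ l = (if l \<in> J then \<phi> l (x $ l) else z $ l)" for x l
    by (simp add: F_def)
  have "inj_on F P"
  proof (rule inj_onI, rule vec_eq_iff[THEN iffD2], rule allI)
    fix x y l assume x: "x \<in> P" and y: "y \<in> P" and eq: "F x = F y"
    show "x $ l = y $ l"
    proof (cases "l \<in> J")
      case True
      then have "\<phi> l (x $ l) = \<phi> l (y $ l)" using eq F_nth by metis
      then show ?thesis using \<phi>(2)[OF True] x y by (auto dest: inj_onD)
    next
      case False
      then show ?thesis using P(2) x y unfolding agree_outside_def by blast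
    qed
  qed
  moreover have "hom_image P (F ` P)"
    unfolding hom_image_def by (intro exI[of _ F]) (simp add: F_nth)
  ultimately have edge: "F ` P \<in> L_edges P"
    using P(1) by (simp add: L_edges_def card_image)
  have "F x \<in> grid J G z" if "x \<in> P" for x
    using \<phi>(1) that by (auto simp: grid_def F_nth image_subset_iff)
  then have "\<forall>v\<in>F ` P. f v = c" using mono by blast
  with edge show ?thesis by blast
qed

lemma colorable_imp_succ_ge_continuum:
  fixes P :: "(real^'n) set"
  assumes P: "finite P" "P \<noteq> {}" "agree_outside J P" and J: "card J = Suc n"
    and "colorable (L_edges P) D"
  shows "succ_ge_continuum n D"
proof -
  obtain f where colours: "\<And>x. f x \<in> D" and proper: "\<forall>e\<in>L_edges P. \<nexists>c. \<forall>v\<in>e. f v = c"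
    using assms(5) unfolding colorable_def by blast
  have N: "1 \<le> card P" using P(1,2) by (simp add: Suc_le_eq card_gt_0_iff)
  have no_grid: "\<not> monochromatic_grid f D (card P) J X z" for X z
    using monochromatic_grid_imp_monochromatic_edge[OF P(1,3)] proper by blast
  show ?thesis
  proof (cases "finite D")
    case True
    obtain X where "monochromatic_grid f D (card P) J X 0"
      by (rule monochromatic_grid_finite_colours[OF True colours N])
    then show ?thesis using no_grid by blast
  next
    case False
    show ?thesis
      unfolding succ_ge_continuum_def succ_iter_def
    proof (intro allI impI)
      fix L :: "real set"
      assume "\<exists>A. ( |A 0|, |D| ) \<in> ordIso \<and> (\<forall>i<n. ( |A (Suc i)|, cardSuc |A i| ) \<in> ordIso)
        \<and> A n = L"
      then obtain A :: "nat \<Rightarrow> real set" where A: "|A 0| =o |D|"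
        "\<And>i. i < n \<Longrightarrow> |A (Suc i)| =o cardSuc |A i|" "A n = L"
        by blast
      show "|UNIV::real set| \<le>o |L|"
      proof (rule ccontr)
        assume "\<not> |UNIV::real set| \<le>o |L|"
        then have "|A n| <o |UNIV::real set|"
          using A(3) not_ordLeq_iff_ordLess card_of_Well_order by blast
        with False colours N A(1,2) J have "monochromatic_grid f D (card P) J UNIV 0"
          by (intro monochromatic_grid_infinite_colours)
        then show False using no_grid by blast
      qed
    qed
  qed
qed

section \<open>Kuratowski colourings and the upper bound\<close>

definition kuratowski_colouring ::
    "'n set \<Rightarrow> real set \<Rightarrow> 'c set \<Rightarrow> (real^'n \<Rightarrow> 'n \<times> 'c) \<Rightarrow> bool" where
  "kuratowski_colouring J X C g \<longleftrightarrow> (\<forall>x. fst (g x) \<in> J \<and> snd (g x) \<in> C) \<and>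
     (\<forall>m\<in>J. \<forall>x y. (\<forall>l\<in>J. x $ l \<in> X \<and> y $ l \<in> X) \<and> (\<forall>l\<in>J. l \<noteq> m \<longrightarrow> x $ l = y $ l)
        \<and> x $ m \<noteq> y $ m \<and> g x = g y \<longrightarrow> fst (g x) \<noteq> m)"

lemma kuratowski_colouring_singleton:
  fixes X :: "real set" and C :: "'c set" and m :: "'n::finite"
  assumes "|X| \<le>o |C|" "C \<noteq> {}"
  shows "\<exists>g. kuratowski_colouring {m} X C g"
proof -
  obtain h where h: "inj_on h X" "h ` X \<subseteq> C" using assms(1) card_of_ordLeq by metis
  obtain c0 where c0: "c0 \<in> C" using assms(2) by blast
  define g where "g x = (m, if x $ m \<in> X then h (x $ m) else c0)" for x :: "real^'n"
  have "kuratowski_colouring {m} X C g"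
    unfolding kuratowski_colouring_def
  proof (intro conjI allI ballI impI)
    fix x show "fst (g x) \<in> {m}" "snd (g x) \<in> C" using h(2) c0 by (auto simp: g_def)
  next
    fix m' x y assume "m' \<in> {m}" and xy: "(\<forall>l\<in>{m}. x $ l \<in> X \<and> y $ l \<in> X)
      \<and> (\<forall>l\<in>{m}. l \<noteq> m' \<longrightarrow> x $ l = y $ l) \<and> x $ m' \<noteq> y $ m' \<and> g x = g y"
    then have "h (x $ m) = h (y $ m)" "x $ m \<in> X" "y $ m \<in> X" by (auto simp: g_def)
    then have "x $ m = y $ m" using h(1) inj_onD by metis
    then show "fst (g x) \<noteq> m'" using xy \<open>m' \<in> {m}\<close> by simp
  qed
  then show ?thesis by blast
qed

lemma exists_small_segment_order:
  assumes B: "infinite B" and X: "|X| \<le>o cardSuc |B|"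
  obtains r where "\<forall>u\<in>X. \<forall>v\<in>X. (u, v) \<in> r \<or> (v, u) \<in> r" "trans r" "antisym r"
    "\<And>v. v \<in> X \<Longrightarrow> |{u\<in>X. (u, v) \<in> r}| \<le>o |B|"
proof -
  let ?R = "cardSuc |B|"
  have CR: "Card_order ?R" by (rule cardSuc_Card_order[OF card_of_Card_order])
  then have WR: "Well_order ?R" by (simp add: card_order_on_def)
  have "|X| \<le>o |Field ?R|"
    using ordLeq_ordIso_trans[OF X ordIso_symmetric[OF card_of_Field_ordIso[OF CR]]] .
  then obtain e where e: "inj_on e X" "e ` X \<subseteq> Field ?R" using card_of_ordLeq by metis
  have R_refl: "refl_on (Field ?R) ?R" and R_total: "total_on (Field ?R) ?R"
    and R_antisym: "antisym ?R" and R_trans: "trans ?R"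
    using WR unfolding well_order_on_def linear_order_on_def partial_order_on_def preorder_on_def
    by blast+
  have under: "|{b. (b, a) \<in> ?R}| \<le>o |B|" if "a \<in> Field ?R" for a
  proof -
    have "|underS ?R a| <o ?R" by (rule card_of_underS[OF CR that])
    then have "|underS ?R a| \<le>o |B|"
      using cardSuc_ordLeq_ordLess[OF card_of_Card_order card_of_Card_order] by blast
    moreover have "|{a}| \<le>o |B|" using B card_of_singl_ordLeq[of B a] by auto
    ultimately have union: "|underS ?R a \<union> {a}| \<le>o |B|"
      using card_of_Un_ordLeq_infinite_Field[of "|B|" "underS ?R a" "{a}"] B
      by (simp add: Field_card_of card_of_Card_order card_of_card_order_on)
    have "{b. (b, a) \<in> ?R} \<subseteq> underS ?R a \<union> {a}" unfolding underS_def by auto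
    then have "|{b. (b, a) \<in> ?R}| \<le>o |underS ?R a \<union> {a}|" by (rule card_of_mono1)
    also note union
    finally show ?thesis .
  qed
  define r where "r = {(u, v). u \<in> X \<and> v \<in> X \<and> (e u, e v) \<in> ?R}"
  show thesis
  proof
    show "\<forall>u\<in>X. \<forall>v\<in>X. (u, v) \<in> r \<or> (v, u) \<in> r"
    proof (intro ballI)
      fix u v assume "u \<in> X" "v \<in> X"
      then have "e u \<in> Field ?R" "e v \<in> Field ?R" using e(2) by auto
      then have "(e u, e v) \<in> ?R \<or> (e v, e u) \<in> ?R"
        using refl_onD[OF R_refl] R_total unfolding total_on_def by metis
      then show "(u, v) \<in> r \<or> (v, u) \<in> r" using \<open>u \<in> X\<close> \<open>v \<in> X\<close> by (auto simp: r_def)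
    qed
    show "trans r" using R_trans unfolding r_def trans_def by blast
    show "antisym r"
    proof (rule antisymI)
      fix u v assume "(u, v) \<in> r" "(v, u) \<in> r"
      then have "e u = e v" "u \<in> X" "v \<in> X" using antisymD[OF R_antisym] by (auto simp: r_def)
      then show "u = v" using inj_onD[OF e(1)] by blast
    qed
    fix v assume v: "v \<in> X"
    have "inj_on e {u\<in>X. (u, v) \<in> r}" using e(1) by (rule inj_on_subset) auto
    moreover have "e ` {u\<in>X. (u, v) \<in> r} \<subseteq> {b. (b, e v) \<in> ?R}" by (auto simp: r_def)
    ultimately have "|{u\<in>X. (u, v) \<in> r}| \<le>o |{b. (b, e v) \<in> ?R}|" using card_of_ordLeq by blast
    also have "|{b. (b, e v) \<in> ?R}| \<le>o |B|" using under e(2) v by blast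
    finally show "|{u\<in>X. (u, v) \<in> r}| \<le>o |B|" .
  qed
qed

lemma finite_has_greatest_wrt:
  assumes "finite S" "S \<noteq> {}"
    and total: "\<And>a b. a \<in> S \<Longrightarrow> b \<in> S \<Longrightarrow> a \<noteq> b \<Longrightarrow> lt a b \<or> lt b a"
    and trans: "\<And>a b c. lt a b \<Longrightarrow> lt b c \<Longrightarrow> lt a c"
  shows "\<exists>m\<in>S. \<forall>a\<in>S. a \<noteq> m \<longrightarrow> lt a m"
  using assms(1,2) total
proof (induction S rule: finite_ne_induct)
  case (singleton x)
  then show ?case by simp
next
  case (insert x F)
  then obtain m where m: "m \<in> F" "\<And>a. a \<in> F \<Longrightarrow> a \<noteq> m \<Longrightarrow> lt a m" by blast
  show ?case
  proof (cases "lt m x")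
    case True
    then show ?thesis using m trans by (intro bexI[of _ x]) auto
  next
    case False
    moreover have "x \<noteq> m" using m(1) \<open>x \<notin> F\<close> by blast
    ultimately have "lt x m" using insert.prems(1)[of x m] m(1) by blast
    then show ?thesis using m by (intro bexI[of _ m]) auto
  qed
qed

lemma exists_top_coordinate:
  fixes J :: "'n::finite set" and X :: "real set"
  assumes J: "J \<noteq> {}" and total: "\<forall>u\<in>X. \<forall>v\<in>X. (u, v) \<in> r \<or> (v, u) \<in> r"
    and "trans r" "antisym r"
  obtains top :: "real^'n \<Rightarrow> 'n" where
    "\<And>p. \<forall>l\<in>J. p $ l \<in> X \<Longrightarrow> top p \<in> J"
    "\<And>p l. \<forall>l\<in>J. p $ l \<in> X \<Longrightarrow> l \<in> J \<Longrightarrow> (p $ l, p $ top p) \<in> r"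
    "\<And>x y m. \<forall>l\<in>J. x $ l \<in> X \<and> y $ l \<in> X \<Longrightarrow> \<forall>l\<in>J. l \<noteq> m \<longrightarrow> x $ l = y $ l \<Longrightarrow>
       m \<noteq> top x \<Longrightarrow> m \<noteq> top y \<Longrightarrow> top x = top y"
proof -
  obtain \<tau> :: "'n \<Rightarrow> nat" where \<tau>: "inj \<tau>"
    using finite_imp_inj_to_nat_seg[OF finite_class.finite_UNIV] by blast
  \<comment> \<open>Ties between equal values are broken by the fixed order \<open>\<tau>\<close> of the coordinates;
      otherwise changing a non-top coordinate could change the top one.\<close>
  define lt where "lt p a b \<longleftrightarrow> (p $ a \<noteq> p $ b \<and> (p $ a, p $ b) \<in> r) \<or> (p $ a = p $ b \<and> \<tau> a < \<tau> b)"
    for p :: "real^'n" and a b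
  have lt_trans: "lt p a c" if "lt p a b" "lt p b c" for p a b c
    using that transD[OF \<open>trans r\<close>, of "p $ a" "p $ b" "p $ c"]
      antisymD[OF \<open>antisym r\<close>, of "p $ b" "p $ c"] unfolding lt_def by auto
  have lt_asym: "\<not> lt p b a" if "lt p a b" for p a b
    using that antisymD[OF \<open>antisym r\<close>] unfolding lt_def by auto
  have top_exists: "\<exists>j. j \<in> J \<and> (\<forall>a\<in>J. a \<noteq> j \<longrightarrow> lt p a j)" if p: "\<forall>l\<in>J. p $ l \<in> X" for p
  proof -
    have "\<exists>j\<in>J. \<forall>a\<in>J. a \<noteq> j \<longrightarrow> lt p a j"
    proof (rule finite_has_greatest_wrt)
      show "finite J" "J \<noteq> {}" using J by simp_all
      show "lt p a b \<or> lt p b a" if "a \<in> J" "b \<in> J" "a \<noteq> b" for a b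
      proof -
        have "\<tau> a \<noteq> \<tau> b" using \<tau> that(3) by (meson injD)
        then show ?thesis using total p that(1,2) unfolding lt_def by (metis linorder_neq_iff)
      qed
      show "lt p a c" if "lt p a b" "lt p b c" for a b c using lt_trans that .
    qed
    then show ?thesis by blast
  qed
  define top where "top p = (SOME j. j \<in> J \<and> (\<forall>a\<in>J. a \<noteq> j \<longrightarrow> lt p a j))" for p
  have top: "top p \<in> J" "\<And>a. a \<in> J \<Longrightarrow> a \<noteq> top p \<Longrightarrow> lt p a (top p)"
    if "\<forall>l\<in>J. p $ l \<in> X" for p
    using someI_ex[OF top_exists[OF that]] unfolding top_def by blast+
  show thesis
  proof
    show "top p \<in> J" if "\<forall>l\<in>J. p $ l \<in> X" for p using top(1)[OF that] .
    show "(p $ l, p $ top p) \<in> r" if p: "\<forall>l\<in>J. p $ l \<in> X" and l: "l \<in> J" for p l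
    proof -
      have "p $ l = p $ top p \<or> (p $ l, p $ top p) \<in> r"
        using top(2)[OF p l] unfolding lt_def by blast
      then show ?thesis using total p l top(1)[OF p] by metis
    qed
    show "top x = top y"
      if xy: "\<forall>l\<in>J. x $ l \<in> X \<and> y $ l \<in> X" and agree: "\<forall>l\<in>J. l \<noteq> m \<longrightarrow> x $ l = y $ l"
        and "m \<noteq> top x" "m \<noteq> top y" for x y m
    proof (rule ccontr)
      assume ne: "top x \<noteq> top y"
      have x: "\<forall>l\<in>J. x $ l \<in> X" and y: "\<forall>l\<in>J. y $ l \<in> X" using xy by auto
      have "x $ top x = y $ top x" "x $ top y = y $ top y"
        using agree top(1)[OF x] top(1)[OF y] that(3,4) by auto
      moreover have "lt x (top y) (top x)" using top(2)[OF x top(1)[OF y]] ne by auto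
      ultimately have "lt y (top y) (top x)" unfolding lt_def by simp
      moreover have "lt y (top x) (top y)" using top(2)[OF y top(1)[OF x]] ne by auto
      ultimately show False using lt_asym by blast
    qed
  qed
qed

lemma kuratowski_colouring_step:
  fixes J :: "'n::finite set" and X :: "real set" and C :: "'c set"
  assumes J: "J \<noteq> {}" and C: "C \<noteq> {}"
    and total: "\<forall>u\<in>X. \<forall>v\<in>X. (u, v) \<in> r \<or> (v, u) \<in> r" and "trans r" "antisym r"
    and segments: "\<And>j v. j \<in> J \<Longrightarrow> v \<in> X \<Longrightarrow>
      \<exists>g. kuratowski_colouring (J - {j}) {u\<in>X. (u, v) \<in> r} C g"
  shows "\<exists>g. kuratowski_colouring J X C g"
proof -
  obtain top :: "real^'n \<Rightarrow> 'n" where top_in: "\<And>p. \<forall>l\<in>J. p $ l \<in> X \<Longrightarrow> top p \<in> J"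
    and top_max: "\<And>p l. \<forall>l\<in>J. p $ l \<in> X \<Longrightarrow> l \<in> J \<Longrightarrow> (p $ l, p $ top p) \<in> r"
    and top_stable: "\<And>x y m. \<forall>l\<in>J. x $ l \<in> X \<and> y $ l \<in> X \<Longrightarrow> \<forall>l\<in>J. l \<noteq> m \<longrightarrow> x $ l = y $ l \<Longrightarrow>
       m \<noteq> top x \<Longrightarrow> m \<noteq> top y \<Longrightarrow> top x = top y"
    using exists_top_coordinate[OF J total \<open>trans r\<close> \<open>antisym r\<close>] by blast
  \<comment> \<open>\<open>p\<close> is coloured like in the hyperplane through its top coordinate, where all its
      other coordinates lie in the initial segment below the top value.\<close>
  define seg where "seg v = {u\<in>X. (u, v) \<in> r}" for v
  define gs where "gs j v = (SOME g. kuratowski_colouring (J - {j}) (seg v) C g)" for j v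
  have gs: "kuratowski_colouring (J - {j}) (seg v) C (gs j v)" if "j \<in> J" "v \<in> X" for j v
    unfolding gs_def seg_def using segments[OF that] by (rule someI_ex)
  obtain j0 c0 where "j0 \<in> J" "c0 \<in> C" using J C by blast
  define inX where "inX p \<longleftrightarrow> (\<forall>l\<in>J. p $ l \<in> X)" for p :: "real^'n"
  define g where "g p = (if inX p then gs (top p) (p $ top p) p else (j0, c0))" for p
  have g: "kuratowski_colouring (J - {top p}) (seg (p $ top p)) C (gs (top p) (p $ top p))"
    and g_eq: "g p = gs (top p) (p $ top p) p" if "inX p" for p
    using that gs top_in unfolding inX_def g_def by auto
  have in_seg: "p $ l \<in> seg (p $ top p)" if "inX p" "l \<in> J" for p l
    using that top_max unfolding inX_def seg_def by blast
  have "kuratowski_colouring J X C g"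
    unfolding kuratowski_colouring_def
  proof (intro conjI allI ballI impI)
    fix x
    show "fst (g x) \<in> J" "snd (g x) \<in> C"
      using g[of x] g_eq[of x] \<open>j0 \<in> J\<close> \<open>c0 \<in> C\<close>
      unfolding kuratowski_colouring_def by (auto simp: g_def)
  next
    fix m x y assume m: "m \<in> J" and xy: "(\<forall>l\<in>J. x $ l \<in> X \<and> y $ l \<in> X)
      \<and> (\<forall>l\<in>J. l \<noteq> m \<longrightarrow> x $ l = y $ l) \<and> x $ m \<noteq> y $ m \<and> g x = g y"
    then have x: "inX x" and y: "inX y" unfolding inX_def by auto
    have fst_x: "fst (g x) \<in> J - {top x}" and fst_y: "fst (g y) \<in> J - {top y}"
      using g[OF x] g[OF y] g_eq[OF x] g_eq[OF y] unfolding kuratowski_colouring_def by auto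
    show "fst (g x) \<noteq> m"
    proof (cases "m = top x \<or> m = top y")
      case True
      then show ?thesis using fst_x fst_y xy by auto
    next
      case False
      then have same: "top y = top x" using top_stable[of x y m] xy by auto
      let ?j = "top x" and ?v = "x $ top x"
      have v: "y $ ?j = ?v" using xy False top_in[of x] x unfolding inX_def by auto
      have "m \<in> J - {?j}" using m False by auto
      moreover have "\<forall>l\<in>J - {?j}. x $ l \<in> seg ?v \<and> y $ l \<in> seg ?v"
        using in_seg[OF x] in_seg[OF y] same v by auto
      moreover have "gs ?j ?v x = gs ?j ?v y" using xy g_eq[OF x] g_eq[OF y] same v by simp
      ultimately have "fst (gs ?j ?v x) \<noteq> m"
        using g[OF x] xy unfolding kuratowski_colouring_def by blast
      then show ?thesis using g_eq[OF x] by simp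
    qed
  qed
  then show ?thesis by blast
qed

lemma kuratowski_colouring_exists:
  fixes B :: "nat \<Rightarrow> 'c set" and J :: "'n::finite set" and X :: "real set"
  assumes B_inf: "\<And>j. infinite (B j)" and B_Suc: "\<And>j. |B (Suc j)| \<le>o cardSuc |B j|"
  shows "card J = Suc i \<Longrightarrow> |X| \<le>o |B i| \<Longrightarrow> \<exists>g. kuratowski_colouring J X (B 0) g"
proof (induction i arbitrary: J X)
  case 0
  then obtain m where "J = {m}" using card_1_singletonE by auto
  moreover have "B 0 \<noteq> {}" using B_inf[of 0] by auto
  ultimately show ?case using kuratowski_colouring_singleton 0 by blast
next
  case (Suc i)
  have "|X| \<le>o cardSuc |B i|" using Suc.prems(2) B_Suc ordLeq_transitive by blast
  then obtain r where r: "\<forall>u\<in>X. \<forall>v\<in>X. (u, v) \<in> r \<or> (v, u) \<in> r" "trans r" "antisym r"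
    and small: "\<And>v. v \<in> X \<Longrightarrow> |{u\<in>X. (u, v) \<in> r}| \<le>o |B i|"
    using exists_small_segment_order[OF B_inf] by blast
  show ?case
  proof (rule kuratowski_colouring_step[OF _ _ r])
    show "J \<noteq> {}" "B 0 \<noteq> {}" using Suc.prems(1) B_inf[of 0] by auto
    fix j v assume "j \<in> J" "v \<in> X"
    then have "card (J - {j}) = Suc i" using Suc.prems(1) by simp
    then show "\<exists>g. kuratowski_colouring (J - {j}) {u\<in>X. (u, v) \<in> r} (B 0) g"
      using Suc.IH small[OF \<open>v \<in> X\<close>] by blast
  qed
qed

lemma kuratowski_colouring_no_monochromatic_edge:
  fixes P :: "(real^'n) set"
  assumes g: "kuratowski_colouring J UNIV C g"
    and P: "finite P" "agree_outside J P" "simple_on J P" and J: "J \<noteq> {}"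
    and Q: "Q \<in> L_edges P" and mono: "\<And>v w. v \<in> Q \<Longrightarrow> w \<in> Q \<Longrightarrow> g v = g w"
  shows False
proof -
  obtain \<phi> where \<phi>: "\<phi> ` P = Q" "\<And>x y i. x \<in> P \<Longrightarrow> y \<in> P \<Longrightarrow> x $ i = y $ i \<Longrightarrow> \<phi> x $ i = \<phi> y $ i"
    and card: "card Q = card P"
    using Q unfolding L_edges_def hom_image_def by blast
  have inj: "inj_on \<phi> P" using eq_card_imp_inj_on[OF P(1), of \<phi>] \<phi>(1) card by simp
  obtain x0 where "x0 \<in> P" using P(3) J unfolding simple_on_def by blast
  define m where "m = fst (g (\<phi> x0))"
  have "m \<in> J" using g unfolding m_def kuratowski_colouring_def by blast
  then obtain x y where xy: "x \<in> P" "y \<in> P" "\<And>l. l \<in> J \<Longrightarrow> x $ l = y $ l \<longleftrightarrow> l \<noteq> m"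
    using P(3) unfolding simple_on_def by blast
  have agree: "\<phi> x $ l = \<phi> y $ l" if "l \<noteq> m" for l
  proof (rule \<phi>(2)[OF xy(1,2)])
    show "x $ l = y $ l"
    proof (cases "l \<in> J")
      case True
      then show ?thesis using xy(3)[OF True] that by simp
    next
      case False
      then show ?thesis using P(2) xy(1,2) unfolding agree_outside_def by blast
    qed
  qed
  have "x \<noteq> y" using xy(3)[OF \<open>m \<in> J\<close>] by auto
  then have "\<phi> x \<noteq> \<phi> y" using inj xy(1,2) inj_onD by metis
  then have "\<phi> x $ m \<noteq> \<phi> y $ m" using agree vec_eq_iff by metis
  moreover have "g (\<phi> x) = g (\<phi> y)" "g (\<phi> x) = g (\<phi> x0)"
    using mono \<phi>(1) xy(1,2) \<open>x0 \<in> P\<close> by blast+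
  ultimately have "fst (g (\<phi> x)) \<noteq> m"
    using g agree \<open>m \<in> J\<close> unfolding kuratowski_colouring_def by blast
  then show False using \<open>g (\<phi> x) = g (\<phi> x0)\<close> m_def by simp
qed

lemma exists_successor_chain:
  assumes "succ_ge_continuum n C"
  obtains B :: "nat \<Rightarrow> real set" where "B 0 = C" "\<And>j. infinite (B j)"
    "\<And>j. |B (Suc j)| \<le>o cardSuc |B j|" "|UNIV::real set| \<le>o |B n|"
proof -
  \<comment> \<open>If \<open>cardSuc |b|\<close> is not the size of a set of reals, it exceeds the continuum and the
      chain goes on with \<open>UNIV\<close>.\<close>
  define step :: "real set \<Rightarrow> real set \<Rightarrow> bool" where
    "step b L \<longleftrightarrow> |L| =o cardSuc |b| \<or> (L = UNIV \<and> |UNIV::real set| <o cardSuc |b| )" for b L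
  define B :: "nat \<Rightarrow> real set" where "B = rec_nat C (\<lambda>_ b. SOME L. step b L)"
  have B_0: "B 0 = C" by (simp add: B_def)
  have "step (B j) (B (Suc j))" for j
  proof -
    have "\<exists>L. step (B j) L"
      using card_of_UNIV_ordLess_if_unrepresentable[OF cardSuc_Card_order[OF card_of_Card_order]]
      unfolding step_def by blast
    moreover have "B (Suc j) = (SOME L. step (B j) L)" by (simp add: B_def)
    ultimately show ?thesis by (simp add: someI_ex)
  qed
  then have B_Suc: "|B (Suc j)| =o cardSuc |B j|
      \<or> (B (Suc j) = UNIV \<and> |UNIV::real set| <o cardSuc |B j| )" for j
    unfolding step_def by blast
  have B_le: "|B (Suc j)| \<le>o cardSuc |B j|" for j
    using B_Suc[of j] ordIso_imp_ordLeq ordLess_imp_ordLeq by auto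
  have B_mono: "|B j| \<le>o |B (Suc j)|" for j
    using B_Suc[of j]
  proof
    assume "|B (Suc j)| =o cardSuc |B j|"
    with cardSuc_ordLeq[OF card_of_Card_order] show ?thesis
      using ordLeq_ordIso_trans ordIso_symmetric by blast
  qed (simp add: card_of_mono1)
  have B_mono': "|B j| \<le>o |B k|" if "j \<le> k" for j k
    using that
  proof (induction k rule: dec_induct)
    case base
    then show ?case by (rule ordLeq_refl[OF card_of_Card_order])
  next
    case (step k)
    then show ?case using B_mono ordLeq_transitive by blast
  qed
  have top: "|UNIV::real set| \<le>o |B n|"
  proof (cases "\<forall>j<n. |B (Suc j)| =o cardSuc |B j|")
    case True
    then have "succ_iter n C (B n)"
      unfolding succ_iter_def
      by (intro exI[of _ B]) (simp add: B_0 ordIso_reflexive card_of_Well_order)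
    then show ?thesis using assms unfolding succ_ge_continuum_def by blast
  next
    case False
    then obtain j where "j < n" "B (Suc j) = UNIV" using B_Suc by blast
    then show ?thesis using B_mono'[of "Suc j" n] by simp
  qed
  have finite_Suc: "finite (B (Suc j))" if "finite (B j)" for j
  proof -
    have fin: "finite (Field (cardSuc |B j| ))" using that card_of_cardSuc_finite by blast
    have "|Field (cardSuc |B j| )| =o cardSuc |B j|"
      by (rule card_of_Field_ordIso[OF cardSuc_Card_order[OF card_of_Card_order]])
    then have "|B (Suc j)| \<le>o |Field (cardSuc |B j| )|"
      using B_le ordLeq_ordIso_trans ordIso_symmetric by blast
    then show ?thesis using fin card_of_ordLeq_finite by blast
  qed
  have "infinite C"
  proof
    assume "finite C"
    then have "finite (B j)" for j by (induction j) (simp_all add: B_0 finite_Suc)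
    then show False using top card_of_ordLeq_finite infinite_UNIV_char_0 by blast
  qed
  then have "infinite (B j)" for j
    using B_mono'[of 0 j] card_of_ordLeq_infinite by (simp add: B_0)
  then show thesis using that B_0 B_le top by blast
qed

section \<open>The chromatic number\<close>

lemma succ_ge_continuum_UNIV: "succ_ge_continuum n (UNIV::real set)"
  unfolding succ_ge_continuum_def succ_iter_def
proof (intro allI impI)
  fix L :: "real set"
  assume "\<exists>A. ( |A 0|, |UNIV::real set| ) \<in> ordIso \<and> (\<forall>i<n. ( |A (Suc i)|, cardSuc |A i| ) \<in> ordIso)
    \<and> A n = L"
  then obtain A :: "nat \<Rightarrow> real set" where A: "|A 0| =o |UNIV::real set|"
    "\<And>i. i < n \<Longrightarrow> |A (Suc i)| =o cardSuc |A i|" "A n = L"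
    by blast
  have "|UNIV::real set| \<le>o |A i|" if "i \<le> n" for i
    using that
  proof (induction i)
    case 0
    then show ?case using A(1) ordIso_symmetric ordIso_imp_ordLeq by blast
  next
    case (Suc i)
    then have "|UNIV::real set| \<le>o cardSuc |A i|"
      using cardSuc_ordLeq[OF card_of_Card_order] ordLeq_transitive by force
    moreover have "|A (Suc i)| =o cardSuc |A i|" using A(2) Suc.prems by simp
    ultimately show ?case using ordLeq_ordIso_trans ordIso_symmetric by blast
  qed
  then show "|UNIV::real set| \<le>o |L|" using A(3) by blast
qed

lemma least_succ_ge_continuum_exists:
  "\<exists>C::real set. succ_ge_continuum n C \<and> (\<forall>D::real set. succ_ge_continuum n D \<longrightarrow> |C| \<le>o |D| )"
proof -
  let ?K = "card_of ` {D::real set. succ_ge_continuum n D}"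
  have "|UNIV::real set| \<in> ?K" using succ_ge_continuum_UNIV by blast
  then obtain k where k: "k \<in> ?K" "\<And>k'. k' <o k \<Longrightarrow> k' \<notin> ?K"
    using wf_ordLess[unfolded wf_eq_minimal] by metis
  then obtain C where C: "succ_ge_continuum n C" "k = |C|" by blast
  have "|C| \<le>o |D|" if "succ_ge_continuum n D" for D :: "real set"
    using k(2)[of "|D|"] that C(2) ordLess_or_ordLeq[OF card_of_Well_order card_of_Well_order]
    by blast
  then show ?thesis using C(1) by blast
qed

lemma succ_ge_continuum_imp_colorable:
  fixes P :: "(real^'n) set" and C :: "real set"
  assumes P: "finite P" "agree_outside J P" "simple_on J P" and J: "card J = Suc n"
    and C: "succ_ge_continuum n C"
  shows "colorable (L_edges P) C"
proof -
  obtain B where B: "B 0 = C" "\<And>j. infinite (B j)" "\<And>j. |B (Suc j)| \<le>o cardSuc |B j|"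
    "|UNIV::real set| \<le>o |B n|"
    using exists_successor_chain[OF C] by blast
  obtain g where g: "kuratowski_colouring J UNIV C g"
    using kuratowski_colouring_exists[OF B(2,3) J B(4)] B(1) by blast
  have "|(UNIV::'n set) \<times> C| \<le>o |C|"
    using card_of_Times_infinite[OF B(2)[of 0] UNIV_not_empty
        card_of_finite_le_infinite[OF finite_class.finite_UNIV B(2)[of 0]]] B(1)
      ordIso_imp_ordLeq by auto
  then obtain \<iota> where \<iota>: "inj_on \<iota> ((UNIV::'n set) \<times> C)" "\<iota> ` ((UNIV::'n set) \<times> C) \<subseteq> C"
    using card_of_ordLeq by metis
  have g_range: "g v \<in> (UNIV::'n set) \<times> C" for v
    using g unfolding kuratowski_colouring_def by (simp add: mem_Times_iff)
  show ?thesis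
    unfolding colorable_def
  proof (intro exI[of _ "\<iota> \<circ> g"] conjI allI ballI notI)
    fix v show "(\<iota> \<circ> g) v \<in> C" using g_range \<iota>(2) by auto
  next
    fix Q assume Q: "Q \<in> L_edges P" and "\<exists>c. \<forall>v\<in>Q. (\<iota> \<circ> g) v = c"
    then obtain c where c: "\<And>v. v \<in> Q \<Longrightarrow> \<iota> (g v) = c" by auto
    have "g v = g w" if "v \<in> Q" "w \<in> Q" for v w
      using inj_onD[OF \<iota>(1) _ g_range g_range, of v w] c[OF that(1)] c[OF that(2)] by simp
    moreover have "J \<noteq> {}" using J by auto
    ultimately show False
      using kuratowski_colouring_no_monochromatic_edge[OF g P _ Q] by blast
  qed
qed

lemma chi_L_edges_eq_least_succ_ge_continuum:
  fixes P :: "(real^'n) set"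
  assumes P: "finite P" "agree_outside J P" "simple_on J P" and J: "J \<noteq> {}"
  shows "chi_is_least_succ_ge (L_edges P) (card J - 1)"
proof -
  define n where "n = card J - 1"
  have card_J: "card J = Suc n" using J unfolding n_def by (simp add: card_gt_0_iff)
  have "P \<noteq> {}" using P(3) J unfolding simple_on_def by blast
  obtain C :: "real set" where C: "succ_ge_continuum n C"
    "\<And>D::real set. succ_ge_continuum n D \<Longrightarrow> |C| \<le>o |D|"
    using least_succ_ge_continuum_exists by blast
  have "is_chromatic_number (L_edges P) C"
    unfolding is_chromatic_number_def
    using succ_ge_continuum_imp_colorable[OF P card_J C(1)]
      colorable_imp_succ_ge_continuum[OF P(1) \<open>P \<noteq> {}\<close> P(2) card_J] C(2)
    by blast
  then show ?thesis unfolding chi_is_least_succ_ge_def n_def[symmetric] using C by blast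
qed

lemma simple_template_iff_simple_on_UNIV: "simple_template P \<longleftrightarrow> simple_on UNIV P"
  by (simp add: simple_template_def simple_on_def)

lemma agree_outside_UNIV: "agree_outside UNIV P"
  by (simp add: agree_outside_def)

lemma Q_of_eq_image: "Q_of P I = (\<lambda>y. \<chi> l. if l \<in> I then y $ l else 0) ` P"
proof (intro set_eqI iffI)
  fix x assume "x \<in> Q_of P I"
  then obtain y where "y \<in> P" "\<forall>i\<in>I. x $ i = y $ i" "\<forall>i. i \<notin> I \<longrightarrow> x $ i = 0"
    unfolding Q_of_def by blast
  then show "x \<in> (\<lambda>y. \<chi> l. if l \<in> I then y $ l else 0) ` P"
    by (intro image_eqI[of _ _ y]) (auto simp: vec_eq_iff)
qed (auto simp: Q_of_def)

lemma agree_outside_Q_of: "agree_outside I (Q_of P I)"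
  by (simp add: agree_outside_def Q_of_def)

lemma simple_on_Q_of:
  assumes I: "distinguisher P I" "card I = e_num P"
  shows "simple_on I (Q_of P I)"
  unfolding simple_on_def
proof
  fix m assume m: "m \<in> I"
  have "card (I - {m}) < e_num P" using card_Diff1_less[OF finite m] I(2) by simp
  then have "\<not> distinguisher P (I - {m})"
    unfolding e_num_def using not_less_Least by blast
  then obtain x y where xy: "x \<in> P" "y \<in> P" "x \<noteq> y" "\<forall>i\<in>I - {m}. x $ i = y $ i"
    unfolding distinguisher_def by blast
  then have "x $ m \<noteq> y $ m" using I(1) unfolding distinguisher_def by blast
  define \<pi> where "\<pi> y = (\<chi> l. if l \<in> I then y $ l else 0)" for y :: "real^'a"
  have "\<pi> x \<in> Q_of P I" "\<pi> y \<in> Q_of P I" using xy(1,2) by (auto simp: Q_of_eq_image \<pi>_def)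
  moreover have "\<forall>l\<in>I. \<pi> x $ l = \<pi> y $ l \<longleftrightarrow> l \<noteq> m"
    using \<open>x $ m \<noteq> y $ m\<close> xy(4) by (auto simp: \<pi>_def)
  ultimately show "\<exists>x\<in>Q_of P I. \<exists>y\<in>Q_of P I. \<forall>l\<in>I. x $ l = y $ l \<longleftrightarrow> l \<noteq> m" by blast
qed

theorem corollary1p5:
  fixes P :: "(real^'n) set" and k :: nat
  assumes "2 \<le> k" and "card P = k"
  shows "(simple_template P \<longrightarrow> chi_is_least_succ_ge (L_edges P) (CARD('n) - 1))
       \<and> (\<forall>I. distinguisher P I \<and> card I = e_num P \<longrightarrow>
              chi_is_least_succ_ge (L_edges (Q_of P I)) (e_num P - 1))"
proof (intro conjI allI impI)
  have "1 < card P" using assms by simp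
  then have P: "finite P" using card.infinite by fastforce
  with \<open>1 < card P\<close> have "\<exists>x\<in>P. \<exists>y\<in>P. x \<noteq> y" using card_le_Suc0_iff_eq by fastforce
  show "chi_is_least_succ_ge (L_edges P) (CARD('n) - 1)" if "simple_template P"
    using chi_L_edges_eq_least_succ_ge_continuum[OF P agree_outside_UNIV] that
    by (simp add: simple_template_iff_simple_on_UNIV)
  fix I assume I: "distinguisher P I \<and> card I = e_num P"
  then have "I \<noteq> {}" using \<open>\<exists>x\<in>P. \<exists>y\<in>P. x \<noteq> y\<close> unfolding distinguisher_def by blast
  moreover have "finite (Q_of P I)" using P by (simp add: Q_of_eq_image)
  ultimately have "chi_is_least_succ_ge (L_edges (Q_of P I)) (card I - 1)"
    using chi_L_edges_eq_least_succ_ge_continuum[OF _ agree_outside_Q_of simple_on_Q_of] I by blast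
  then show "chi_is_least_succ_ge (L_edges (Q_of P I)) (e_num P - 1)" using I by simp
qed

end
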